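(* For every integer $p\ge1$, $$B_{2p}=-\frac{(2p)!}{2^{2p}-2}\det U_p,\qquad E_{2p}=(2p)!\det V_p,$$ where $U_p$ and $V_p$ are $(p+1)\times(p+1)$ matrices (rows and columns indexed $0,\dots,p$) whose last column is $(1,0,\dots,0)^T$ and whose first $p$ columns are given, for $0\le j\le p-1$, by $(U_p)_{ij}=1/(2(i-j)+1)!$ and $(V_p)_{ij}=1/(2(i-j))!$ when $i\ge j$, and $(U_p)_{ij}=(V_p)_{ij}=0$ when $i<j$.
   Context: The Bernoulli numbers are defined by $\sum_{n\ge0}B_nz^n/n!=z/(e^z-1)$, and the Euler numbers by $\sum_{n\ge0}E_nz^n/n!=1/\cosh z$. *)

theory Defs
  imports "HOL-Computational_Algebra.Formal_Power_Series" "Jordan_Normal_Form.Determinant"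
begin

definition bernoulli_num :: "nat \<Rightarrow> real" where
  "bernoulli_num n = fact n * fps_nth (fps_X / (fps_exp 1 - 1)) n"

definition fps_cosh_real :: "real fps" where
  "fps_cosh_real = fps_const (1/2) * (fps_exp 1 + fps_exp (-1))"

definition euler_num :: "nat \<Rightarrow> real" where
  "euler_num n = fact n * fps_nth (inverse fps_cosh_real) n"

definition U_mat :: "nat \<Rightarrow> real mat" where
  "U_mat p = mat (p+1) (p+1) (\<lambda>(i,j).
     if j = p then (if i = 0 then 1 else 0)
     else if j \<le> i then 1 / fact (2*(i-j)+1) else 0)"

definition V_mat :: "nat \<Rightarrow> real mat" where
  "V_mat p = mat (p+1) (p+1) (\<lambda>(i,j).
     if j = p then (if i = 0 then 1 else 0)
     else if j \<le> i then 1 / fact (2*(i-j)) else 0)"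

end

theory Submission
  imports Defs
begin

text \<open>
  Let \<open>f(z) = \<Sum> a\<^sub>k z^(2k)\<close> be even with \<open>a\<^sub>0 = 1\<close>, and \<open>1/f(z) = \<Sum> b\<^sub>k z^(2k)\<close>.
  The bordered lower Toeplitz matrix of \<open>a\<^sub>0, \<dots>, a\<^sub>p\<close> factors as \<open>T C\<close>, with \<open>T\<close> the
  unitriangular Toeplitz matrix of the \<open>a\<^sub>k\<close> and \<open>C\<close> the identity with last column
  \<open>(b\<^sub>0, \<dots>, b\<^sub>p)\<close>: the last column of \<open>T C\<close> is the convolution
  \<open>\<Sum>\<^sub>j a(i-j) b(j) = [i = 0]\<close>. Hence its determinant is \<open>b\<^sub>p\<close>.
  For \<open>V\<^sub>p\<close> take \<open>f = cosh\<close>. For \<open>U\<^sub>p\<close> take \<open>f(z) = sinh z / z\<close>; with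
  \<open>\<beta>(z) = z / (e^z - 1)\<close> one has \<open>z / sinh z = 2 \<beta>(z) - \<beta>(2z)\<close>, so
  \<open>b\<^sub>p = (2 - 2^(2p)) B(2p) / (2p)!\<close>.
\<close>

definition bordered_toeplitz_mat :: "(nat \<Rightarrow> 'a::{zero,one}) \<Rightarrow> nat \<Rightarrow> 'a mat" where
  "bordered_toeplitz_mat a p = mat (p+1) (p+1) (\<lambda>(i,j).
     if j = p then (if i = 0 then 1 else 0)
     else if j \<le> i then a (i-j) else 0)"

lemma det_lower_unitriangular_toeplitz:
  fixes a :: "nat \<Rightarrow> 'a::comm_ring_1"
  assumes "a 0 = 1"
  shows "det (mat n n (\<lambda>(i,j). if j \<le> i then a (i-j) else 0)) = 1"
  using assms by (subst det_lower_triangular[of n]) (auto simp: prod_list_diag_prod)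

lemma det_one_mat_with_last_col:
  fixes b :: "nat \<Rightarrow> 'a::comm_ring_1"
  shows "det (mat (p+1) (p+1) (\<lambda>(i,j). if j = p then b i else of_bool (i = j))) = b p"
proof -
  have "det (mat (p+1) (p+1) (\<lambda>(i,j). if j = p then b i else of_bool (i = j)))
      = (\<Prod>i = 0..<p+1. if i = p then b p else 1)"
    by (subst det_upper_triangular[of _ "p+1"])
       (auto simp: upper_triangular_def prod_list_diag_prod intro!: prod.cong)
  also have "\<dots> = b p" by simp
  finally show ?thesis .
qed

lemma bordered_toeplitz_mat_eq_mult:
  fixes a b :: "nat \<Rightarrow> 'a::comm_ring_1"
  assumes conv: "\<And>i. i \<le> p \<Longrightarrow> (\<Sum>j=0..i. a (i-j) * b j) = of_bool (i = 0)"
  shows "bordered_toeplitz_mat a p =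
     mat (p+1) (p+1) (\<lambda>(i,j). if j \<le> i then a (i-j) else 0)
   * mat (p+1) (p+1) (\<lambda>(i,j). if j = p then b i else of_bool (i = j))"
    (is "_ = ?T * ?C")
proof (rule eq_matI)
  fix i j assume "i < dim_row (?T * ?C)" "j < dim_col (?T * ?C)"
  then have i: "i \<le> p" and j: "j \<le> p" by auto
  have "(?T * ?C) $$ (i,j) = (\<Sum>k = 0..<p+1. ?T $$ (i,k) * ?C $$ (k,j))"
    using i j by (simp add: scalar_prod_def)
  also have "\<dots> = bordered_toeplitz_mat a p $$ (i,j)"
  proof (cases "j = p")
    case True
    have "(\<Sum>k = 0..<p+1. ?T $$ (i,k) * ?C $$ (k,j)) = (\<Sum>k = 0..i. a (i-k) * b k)"
      using True i by (intro sum.mono_neutral_cong_right) auto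
    then show ?thesis using True i conv by (simp add: bordered_toeplitz_mat_def)
  next
    case False
    have "(\<Sum>k = 0..<p+1. ?T $$ (i,k) * ?C $$ (k,j)) = ?T $$ (i,j)"
      using False i j by (subst sum.remove[of _ j]) auto
    then show ?thesis using False i j by (simp add: bordered_toeplitz_mat_def)
  qed
  finally show "bordered_toeplitz_mat a p $$ (i,j) = (?T * ?C) $$ (i,j)" by simp
qed (auto simp: bordered_toeplitz_mat_def)

lemma det_bordered_toeplitz_mat:
  fixes a b :: "nat \<Rightarrow> 'a::comm_ring_1"
  assumes "a 0 = 1"
    and "\<And>i. i \<le> p \<Longrightarrow> (\<Sum>j=0..i. a (i-j) * b j) = of_bool (i = 0)"
  shows "det (bordered_toeplitz_mat a p) = b p"
proof -
  let ?T = "mat (p+1) (p+1) (\<lambda>(i,j). if j \<le> i then a (i-j) else 0)"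
  let ?C = "mat (p+1) (p+1) (\<lambda>(i,j). if j = p then b i else of_bool (i = j))"
  have "bordered_toeplitz_mat a p = ?T * ?C"
    using assms(2) by (rule bordered_toeplitz_mat_eq_mult)
  then have "det (bordered_toeplitz_mat a p) = det ?T * det ?C"
    by (simp add: det_mult[of _ "p+1"])
  with det_one_mat_with_last_col[of p b] show ?thesis
    by (simp add: assms(1) det_lower_unitriangular_toeplitz)
qed

lemma sum_atLeastAtMost_double_even:
  fixes h :: "nat \<Rightarrow> 'a::comm_monoid_add"
  assumes "\<And>m. odd m \<Longrightarrow> m < 2*i \<Longrightarrow> h m = 0"
  shows "(\<Sum>m=0..2*i. h m) = (\<Sum>j=0..i. h (2*j))"
proof -
  have "(\<Sum>m=0..2*i. h m) = (\<Sum>m\<in>(\<lambda>j. 2*j) ` {0..i}. h m)"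
  proof (intro sum.mono_neutral_right ballI)
    fix m assume "m \<in> {0..2*i} - (\<lambda>j. 2*j) ` {0..i}"
    then have "odd m" and "m < 2*i" by (auto elim!: evenE)
    then show "h m = 0" by (rule assms)
  qed auto
  also have "\<dots> = (\<Sum>j=0..i. h (2*j))"
    by (simp add: sum.reindex inj_on_def)
  finally show ?thesis .
qed

lemma fps_inverse_even_convolution:
  fixes f :: "'a::field fps"
  assumes "fps_nth f 0 = 1" and "\<And>n. odd n \<Longrightarrow> fps_nth f n = 0"
  shows "(\<Sum>j=0..i. fps_nth f (2*(i-j)) * fps_nth (inverse f) (2*j)) = of_bool (i = 0)"
proof -
  have "of_bool (i = 0) = fps_nth (inverse f * f) (2*i)"
    using assms(1) by (simp add: inverse_mult_eq_1)
  also have "\<dots> = (\<Sum>m=0..2*i. fps_nth (inverse f) m * fps_nth f (2*i - m))"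
    by (simp add: fps_mult_nth)
  also have "\<dots> = (\<Sum>j=0..i. fps_nth (inverse f) (2*j) * fps_nth f (2*i - 2*j))"
    using assms(2) by (intro sum_atLeastAtMost_double_even) auto
  finally show ?thesis
    by (simp add: diff_mult_distrib mult.commute)
qed

lemma det_bordered_toeplitz_mat_fps_inverse:
  fixes f :: "'a::field fps"
  assumes "fps_nth f 0 = 1" and "\<And>n. odd n \<Longrightarrow> fps_nth f n = 0"
  shows "det (bordered_toeplitz_mat (\<lambda>k. fps_nth f (2*k)) p) = fps_nth (inverse f) (2*p)"
  using assms by (intro det_bordered_toeplitz_mat[where b = "\<lambda>j. fps_nth (inverse f) (2*j)"]
                        fps_inverse_even_convolution) auto

definition fps_sinhc :: "'a::field_char_0 fps" where
  "fps_sinhc = Abs_fps (\<lambda>n. if even n then 1 / fact (n+1) else 0)"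

lemma fps_X_times_sinhc:
  "fps_const 2 * fps_X * fps_sinhc = fps_exp 1 - fps_exp (-1 :: 'a::field_char_0)"
proof (rule fps_ext)
  fix n
  show "fps_nth (fps_const 2 * fps_X * fps_sinhc) n = fps_nth (fps_exp 1 - fps_exp (-1 :: 'a)) n"
  proof (cases n)
    case (Suc m)
    then show ?thesis
      by (cases "even m") (simp_all add: fps_sinhc_def mult.assoc del: fact_Suc)
  qed simp
qed

lemma fps_X_div_exp_minus_one_mult:
  "fps_X / (fps_exp 1 - 1) * (fps_exp 1 - 1) = (fps_X :: 'a::field_char_0 fps)"
proof (rule fps_times_divide_eq)
  have "fps_nth (fps_exp 1 - 1 :: 'a fps) 1 = 1" by simp
  then show "fps_exp 1 - 1 \<noteq> (0 :: 'a fps)" by force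
  have "subdegree (fps_exp 1 - 1 :: 'a fps) \<le> 1" by (rule subdegree_leI) simp
  then show "subdegree (fps_exp 1 - 1 :: 'a fps) \<le> subdegree (fps_X :: 'a fps)" by simp
qed

lemma inverse_fps_sinhc:
  fixes \<beta> :: "'a::field_char_0 fps"
  defines "\<beta> \<equiv> fps_X / (fps_exp 1 - 1)"
  shows "inverse fps_sinhc = fps_const 2 * \<beta> - (\<beta> oo (fps_const 2 * fps_X))"
proof -
  define E :: "'a fps" where "E = fps_exp 1"
  define K where "K = fps_const 2 * \<beta> - (\<beta> oo (fps_const 2 * fps_X))"
  have \<beta>: "\<beta> * (E - 1) = fps_X"
    unfolding \<beta>_def E_def by (rule fps_X_div_exp_minus_one_mult)
  have X2: "fps_X oo (fps_const 2 * fps_X) = fps_const 2 * (fps_X :: 'a fps)"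
    by (rule fps_ext) (simp add: fps_X_fps_compose)
  have E2: "E oo (fps_const 2 * fps_X) = E * E"
    unfolding E_def fps_exp_add_mult[symmetric] by simp
  have "(\<beta> * (E - 1)) oo (fps_const 2 * fps_X) = fps_X oo (fps_const 2 * fps_X)"
    by (simp only: \<beta>)
  then have \<beta>2: "(\<beta> oo (fps_const 2 * fps_X)) * (E * E - 1) = fps_const 2 * fps_X"
    by (simp add: fps_compose_mult_distrib fps_compose_sub_distrib E2 X2 del: fps_exp_compose_linear)
  have "K * (E * E - 1) = fps_const 2 * (\<beta> * (E - 1)) * (E + 1) - (\<beta> oo (fps_const 2 * fps_X)) * (E * E - 1)"
    by (simp add: K_def ring_distribs mult_ac)
  also have "\<dots> = fps_const 2 * fps_X * E"
    unfolding \<beta> \<beta>2 by (simp add: algebra_simps)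
  finally have K: "K * (E * E - 1) = fps_const 2 * fps_X * E" .
  have "E * E - 1 = E * (E - fps_exp (-1))"
    using fps_exp_add_mult[of "-1::'a" 1] by (simp add: E_def algebra_simps)
  also have "\<dots> = fps_const 2 * fps_X * E * fps_sinhc"
    by (simp add: E_def fps_X_times_sinhc[symmetric] mult_ac)
  finally have "(fps_const 2 * fps_X * E) * (fps_sinhc * K) = (fps_const 2 * fps_X * E) * 1"
    using K by (simp add: mult_ac)
  moreover have "fps_const 2 * fps_X * E \<noteq> 0"
  proof -
    have "fps_nth (fps_const 2 * fps_X * E) 1 = 2"
      by (simp add: E_def fps_mult_nth mult.assoc)
    then show ?thesis by force
  qed
  ultimately have "fps_sinhc * K = 1" by (simp only: mult_cancel_left) simp
  then show ?thesis unfolding K_def by (rule fps_inverse_unique)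
qed

lemma fps_cosh_real_nth: "fps_nth fps_cosh_real n = (if even n then 1 / fact n else 0)"
  by (simp add: fps_cosh_real_def)

theorem mainTheorem7:
  fixes p :: nat
  assumes "p \<ge> 1"
  shows "bernoulli_num (2*p) = - (fact (2*p) / (2^(2*p) - 2)) * det (U_mat p)
       \<and> euler_num (2*p) = fact (2*p) * det (V_mat p)"
proof
  have U: "U_mat p = bordered_toeplitz_mat (\<lambda>k. fps_nth fps_sinhc (2*k)) p"
    by (rule eq_matI) (auto simp: U_mat_def bordered_toeplitz_mat_def fps_sinhc_def)
  have "det (U_mat p) = fps_nth (inverse fps_sinhc) (2*p)"
    unfolding U by (rule det_bordered_toeplitz_mat_fps_inverse) (simp_all add: fps_sinhc_def)
  also have "\<dots> = (2 - 2^(2*p)) * fps_nth (fps_X / (fps_exp 1 - 1)) (2*p)"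
    by (simp add: inverse_fps_sinhc left_diff_distrib)
  finally have "det (U_mat p) = (2 - 2^(2*p)) * bernoulli_num (2*p) / fact (2*p)"
    by (simp add: bernoulli_num_def)
  moreover have "(2::real)^(2*p) \<noteq> 2"
    using power_increasing[of 2 "2*p" "2::real"] assms by auto
  ultimately show "bernoulli_num (2*p) = - (fact (2*p) / (2^(2*p) - 2)) * det (U_mat p)"
    by (simp add: field_simps)
next
  have V: "V_mat p = bordered_toeplitz_mat (\<lambda>k. fps_nth fps_cosh_real (2*k)) p"
    by (rule eq_matI) (auto simp: V_mat_def bordered_toeplitz_mat_def fps_cosh_real_nth)
  have "det (V_mat p) = fps_nth (inverse fps_cosh_real) (2*p)"
    unfolding V by (rule det_bordered_toeplitz_mat_fps_inverse) (simp_all add: fps_cosh_real_nth)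
  then show "euler_num (2*p) = fact (2*p) * det (V_mat p)"
    by (simp add: euler_num_def)
qed

end
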